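(* Fix $L\in\mathbb Z$ and work on $Y_L=\mathbb R\times(0,2^L]\times\mathbb R$ with the objects described in the context. The quadruple $(Y_L,\mu,\nu,\mathcal C)$, where $\mathcal C(A)=\mathcal M(\mathcal N(\mathcal Q(A)))$ and $\mathcal E=\mathcal D_L$, satisfies the canopy condition for every choice of parameters $\Phi,K\ge2$.
   Context: Dyadic intervals $I(m,l)=(2^lm,2^l(m+1)]$; tiles $H(m,l,n)=I(m,l)\times(2^{l-1},2^l]\times I(n,-l)$. $\mathcal D_L$ = strips $D(m,l)=I(m,l)\times(0,2^l]\times\mathbb R$ with $l\le L$, $\sigma(D(m,l))=2^l$. $\mathcal T_L$ = trees $T(m,l,n)=\bigcup_{l'\le l}\bigcup_{m':\,I(m',l')\subseteq I(m,l)}H(m',l',N(n,l'))$ with $l\le L$ ($N(n,l')$ the integer with $I(n,-l)\subseteq I(N(n,l'),-l')$), $\tau(T(m,l,n))=2^l$. Outer measures on $Y_L$: $\mu(A)=\inf\{\sum_{S\in\mathcal S'}\sigma(S):\mathcal S'\subseteq\mathcal D_L,A\subseteq\bigcup\mathcal S'\}$, $\nu$ likewise from $(\mathcal T_L,\tau)$. $\pi$ = projection onto first coordinate, $|\cdot|$ Lebesgue measure. For $E\in\mathcal D_L$, $E_+=\{(x,s,\xi)\in E:s>\sigma(E)/2\}$. $\mathcal Q(A)=\{E\in\mathcal D_L:E_+\cap A\ne\varnothing\}$. For $\mathcal D_1\subseteq\mathcal D_L$: $\mathcal N(\mathcal D_1)=\{E\in\mathcal D_L:|\pi(E)\cap\pi(\bigcup\mathcal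 D_1)|\ge|\pi(E)|/2\}$; $\mathcal M(\mathcal D_1)$ = elements of $\mathcal D_1$ maximal under inclusion. $\mathbf B_{\mathcal C}(A)=\bigcup_{E\in\mathcal C(A)}E$. A $\mu$-covering function with parameter $\Phi$: a map $\mathcal C$ assigning to each $A$ a subcollection of pairwise disjoint elements of $\mathcal E$ with $A\subseteq\mathbf B_{\mathcal C}(A)$, $\mu(\mathbf B_{\mathcal C}(A))\le\Phi\mu(A)$, $\mathbf B_{\mathcal C}$ monotone. A collection $\mathcal A$ of pairwise disjoint sets is $\nu$-Carathéodory (parameter $K$) if $\sum_{A\in\mathcal A}\nu(U\cap A)\le K\nu(U\cap\bigcup\mathcal A)$ for all $U$. Canopy condition (parameters $\Phi,K$): $\mathcal C$ is a $\mu$-covering function with parameter $\Phi$, and for every $\nu$-Carathéodory collection $\mathcal A$ (parameter $K$) and every $D$ disjoint from $\mathbf B_{\mathcal C}(\bigcup_{A\in\mathcal A}A)$, $\mathcal A\cup\{D\}$ is $\nu$-Carathéodory (parameter $K$). *)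

theory Defs
  imports "HOL-Analysis.Analysis"
begin

type_synonym pt = "real \<times> real \<times> real"

definition dyI :: "int \<Rightarrow> int \<Rightarrow> real set" where
  "dyI m l = {(2::real) powi l * of_int m <.. (2::real) powi l * of_int (m + 1)}"

definition tile :: "int \<Rightarrow> int \<Rightarrow> int \<Rightarrow> pt set" where
  "tile m l n = dyI m l \<times> ({(2::real) powi (l - 1) <.. (2::real) powi l} \<times> dyI n (- l))"

definition YL :: "int \<Rightarrow> pt set" where
  "YL L = UNIV \<times> ({0 <.. (2::real) powi L} \<times> UNIV)"

definition strip :: "int \<Rightarrow> int \<Rightarrow> pt set" where
  "strip m l = dyI m l \<times> ({0 <.. (2::real) powi l} \<times> UNIV)"

definition strips :: "int \<Rightarrow> pt set set" where
  "strips L = {strip m l | m l. l \<le> L}"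

definition sigma_strip :: "pt set \<Rightarrow> real" where
  "sigma_strip E = (THE s. \<exists>m l. E = strip m l \<and> s = (2::real) powi l)"

definition Nidx :: "int \<Rightarrow> int \<Rightarrow> int \<Rightarrow> int" where
  "Nidx n l l' = (THE N. dyI n (- l) \<subseteq> dyI N (- l'))"

definition tree :: "int \<Rightarrow> int \<Rightarrow> int \<Rightarrow> pt set" where
  "tree m l n = (\<Union>l'\<in>{..l}. \<Union>m'\<in>{m'. dyI m' l' \<subseteq> dyI m l}. tile m' l' (Nidx n l l'))"

definition trees :: "int \<Rightarrow> pt set set" where
  "trees L = {tree m l n | m l n. l \<le> L}"

definition tau_tree :: "pt set \<Rightarrow> real" where
  "tau_tree T = (THE s. \<exists>m l n. T = tree m l n \<and> s = (2::real) powi l)"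

definition outer_measure :: "'a set set \<Rightarrow> ('a set \<Rightarrow> real) \<Rightarrow> 'a set \<Rightarrow> ennreal" where
  "outer_measure S w A =
     (INF S' \<in> {S'. S' \<subseteq> S \<and> A \<subseteq> \<Union>S'}. (\<Sum>\<^sub>\<infinity> E\<in>S'. ennreal (w E)))"

definition muL :: "int \<Rightarrow> pt set \<Rightarrow> ennreal" where
  "muL L = outer_measure (strips L) sigma_strip"

definition nuL :: "int \<Rightarrow> pt set \<Rightarrow> ennreal" where
  "nuL L = outer_measure (trees L) tau_tree"

definition plus_part :: "pt set \<Rightarrow> pt set" where
  "plus_part E = {p \<in> E. fst (snd p) > sigma_strip E / 2}"

definition Qc :: "int \<Rightarrow> pt set \<Rightarrow> pt set set" where
  "Qc L A = {E \<in> strips L. plus_part E \<inter> A \<noteq> {}}"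

definition Nc :: "int \<Rightarrow> pt set set \<Rightarrow> pt set set" where
  "Nc L D1 = {E \<in> strips L.
      emeasure lborel (fst ` E \<inter> fst ` (\<Union>D1)) \<ge> emeasure lborel (fst ` E) / 2}"

definition Mc :: "'a set set \<Rightarrow> 'a set set" where
  "Mc D1 = {E \<in> D1. \<forall>F\<in>D1. E \<subseteq> F \<longrightarrow> F = E}"

definition Cc :: "int \<Rightarrow> pt set \<Rightarrow> pt set set" where
  "Cc L A = Mc (Nc L (Qc L A))"

definition covering_function ::
  "'a set \<Rightarrow> ('a set \<Rightarrow> ennreal) \<Rightarrow> 'a set set \<Rightarrow> real \<Rightarrow> ('a set \<Rightarrow> 'a set set) \<Rightarrow> bool" where
  "covering_function Y mu E Phi C \<longleftrightarrow>
     (\<forall>A. A \<subseteq> Y \<longrightarrow>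
        C A \<subseteq> E \<and> disjoint (C A) \<and> A \<subseteq> \<Union>(C A) \<and>
        mu (\<Union>(C A)) \<le> ennreal Phi * mu A) \<and>
     (\<forall>A A'. A \<subseteq> A' \<and> A' \<subseteq> Y \<longrightarrow> \<Union>(C A) \<subseteq> \<Union>(C A'))"

definition caratheodory :: "'a set \<Rightarrow> ('a set \<Rightarrow> ennreal) \<Rightarrow> real \<Rightarrow> 'a set set \<Rightarrow> bool" where
  "caratheodory Y nu K \<A> \<longleftrightarrow>
     disjoint \<A> \<and> (\<forall>A\<in>\<A>. A \<subseteq> Y) \<and>
     (\<forall>U. U \<subseteq> Y \<longrightarrow> (\<Sum>\<^sub>\<infinity> A\<in>\<A>. nu (U \<inter> A)) \<le> ennreal K * nu (U \<inter> \<Union>\<A>))"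

definition canopy_condition ::
  "'a set \<Rightarrow> ('a set \<Rightarrow> ennreal) \<Rightarrow> ('a set \<Rightarrow> ennreal) \<Rightarrow> 'a set set \<Rightarrow> real \<Rightarrow> real
    \<Rightarrow> ('a set \<Rightarrow> 'a set set) \<Rightarrow> bool" where
  "canopy_condition Y mu nu E Phi K C \<longleftrightarrow>
     covering_function Y mu E Phi C \<and>
     (\<forall>\<A> D. caratheodory Y nu K \<A> \<and> D \<subseteq> Y \<and> D \<inter> \<Union>(C (\<Union>\<A>)) = {}
        \<longrightarrow> caratheodory Y nu K (insert D \<A>))"

end

theory Submission
  imports Defs
begin

text \<open>Covering: \<mu>(A) dominates the Lebesgue measure of the shadow P(A) = \<pi>(\<Union>Q(A)),
  because every strip containing a point of the upper half E_+ of a strip E contains E.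
  A strip of N(Q(A)) has at least half of its base in P(A) and maximal strips have disjoint
  bases, so \<mu>(B_C(A)) \<le> 2|P(A)| \<le> 2\<mu>(A).

  Caratheodory: put W = \<Union>\<A> and cover U \<inter> (D \<union> W) by trees. The trees contained in
  B_C(W) miss D. Every other tree T has its top strip outside N(Q(W)), so less than half
  of its base lies in P(W), and T \<inter> W is covered by the subtrees of T over the maximal strips
  of Q(W) below T, whose sizes add up to at most \<tau>(T)/2. The trees of the second kind cover
  U \<inter> D, and together with the first kind their subtrees cover U \<inter> W; for K \<ge> 2 this
  yields \<nu>(U \<inter> D) + K\<nu>(U \<inter> W) \<le> K\<nu>(U \<inter> (D \<union> W)).\<close>

section \<open>Dyadic intervals and scales\<close>

lemma powi2_le_iff [simp]: "(2::real) powi a \<le> 2 powi b \<longleftrightarrow> a \<le> b"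
  by (metis linorder_not_le order_less_imp_le power_int_increasing power_int_strict_increasing
      one_le_numeral one_less_numeral_iff semiring_norm(76))

lemma powi2_less_iff [simp]: "(2::real) powi a < 2 powi b \<longleftrightarrow> a < b"
  by (meson linorder_not_le powi2_le_iff)

definition dyadic_index :: "int \<Rightarrow> real \<Rightarrow> int" where
  "dyadic_index l x = \<lceil>x / 2 powi l\<rceil> - 1"

lemma mem_dyI_iff: "x \<in> dyI m l \<longleftrightarrow> m = dyadic_index l x"
proof -
  have "x \<in> dyI m l \<longleftrightarrow> of_int m < x / 2 powi l \<and> x / 2 powi l \<le> of_int m + 1"
    by (simp add: dyI_def pos_less_divide_eq pos_divide_le_eq mult.commute)
  also have "\<dots> \<longleftrightarrow> \<lceil>x / 2 powi l\<rceil> = m + 1"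
    by (simp add: ceiling_eq_iff)
  finally show ?thesis
    unfolding dyadic_index_def by auto
qed

lemma dyI_nonempty: "dyI m l \<noteq> {}"
  using mem_dyI_iff[of "2 powi l * (of_int m + 1)" m l] by (auto simp: dyI_def)

lemma sets_dyI [measurable, simp]: "dyI m l \<in> sets borel"
  by (simp add: dyI_def)

lemma emeasure_dyI [simp]: "emeasure lborel (dyI m l) = ennreal (2 powi l)"
  by (simp add: dyI_def algebra_simps)

lemma dyadic_index_coarsen:
  assumes "l \<le> l'" and "dyadic_index l x = dyadic_index l y"
  shows "dyadic_index l' x = dyadic_index l' y"
proof -
  have "\<lfloor>- (z / 2 powi l')\<rfloor> = \<lfloor>- (z / 2 powi l)\<rfloor> div 2 ^ nat (l' - l)" for z :: real
  proof -
    have "(2::real) powi l' = 2 powi l * 2 powi (l' - l)"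
      by (simp add: power_int_add[symmetric])
    also have "\<dots> = 2 powi l * 2 ^ nat (l' - l)"
      using assms(1) by (simp add: power_int_nonneg_exp)
    finally show ?thesis
      using floor_divide_real_eq_div[of "2 ^ nat (l' - l)" "- (z / 2 powi l)"] by simp
  qed
  moreover have "\<lfloor>- (x / 2 powi l)\<rfloor> = \<lfloor>- (y / 2 powi l)\<rfloor>"
    using assms(2) by (simp add: dyadic_index_def ceiling_def)
  ultimately show ?thesis
    by (simp add: dyadic_index_def ceiling_def)
qed

lemma dyI_nested:
  assumes "l \<le> l'" and "x \<in> dyI m l" and "x \<in> dyI m' l'"
  shows "dyI m l \<subseteq> dyI m' l'"
proof
  fix y
  assume "y \<in> dyI m l"
  then have "dyadic_index l y = dyadic_index l x"
    using assms(2) by (simp add: mem_dyI_iff)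
  then have "dyadic_index l' y = dyadic_index l' x"
    by (rule dyadic_index_coarsen[OF assms(1)])
  then show "y \<in> dyI m' l'"
    using assms(3) by (simp add: mem_dyI_iff)
qed

lemma dyI_level_le:
  assumes "dyI m l \<subseteq> dyI m' l'"
  shows "l \<le> l'"
proof -
  have "emeasure lborel (dyI m l) \<le> emeasure lborel (dyI m' l')"
    using assms by (intro emeasure_mono) auto
  then show ?thesis
    by simp
qed

lemma dyI_subset_same_level: "dyI m l \<subseteq> dyI m' l \<Longrightarrow> m = m'"
  by (metis dyI_nonempty mem_dyI_iff subset_empty subset_iff)

lemma dyI_inject: "dyI m l = dyI m' l' \<Longrightarrow> m = m' \<and> l = l'"
  by (metis dyI_level_le dyI_subset_same_level order_antisym order_refl)

lemma dyI_nested_or_disjoint: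
  "dyI m l \<subseteq> dyI m' l' \<or> dyI m' l' \<subseteq> dyI m l \<or> dyI m l \<inter> dyI m' l' = {}"
  by (metis disjoint_iff dyI_nested linorder_le_cases)

definition dyadic_level :: "real \<Rightarrow> int" where
  "dyadic_level s = \<lceil>log 2 s\<rceil>"

lemma dyadic_level_bounds:
  assumes "0 < s"
  shows "2 powi (dyadic_level s - 1) < s" and "s \<le> 2 powi dyadic_level s"
proof -
  have "log 2 s \<le> of_int (dyadic_level s)" "of_int (dyadic_level s - 1) < log 2 s"
    unfolding dyadic_level_def by linarith+
  then have "2 powr of_int (dyadic_level s - 1) < s" "s \<le> 2 powr of_int (dyadic_level s)"
    using assms by (simp_all add: less_log_iff log_le_iff del: of_int_diff)
  moreover have "2 powr of_int k = (2::real) powi k" for k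
    by (simp add: powr_real_of_int')
  ultimately show "2 powi (dyadic_level s - 1) < s" and "s \<le> 2 powi dyadic_level s"
    by metis+
qed

lemma dyadic_level_eqI:
  assumes "2 powi (k - 1) < s" and "s \<le> 2 powi k"
  shows "dyadic_level s = k"
proof -
  have s: "0 < s"
    using assms(1) by (meson order.strict_trans zero_less_power_int zero_less_numeral)
  have "2 powi (dyadic_level s - 1) < (2::real) powi k" "2 powi (k - 1) < (2::real) powi dyadic_level s"
    using dyadic_level_bounds[OF s] assms by linarith+
  then show ?thesis
    by simp
qed

lemma dyadic_level_le:
  assumes "0 < s" and "s \<le> 2 powi l"
  shows "dyadic_level s \<le> l"
proof -
  have "2 powi (dyadic_level s - 1) < (2::real) powi l"
    using dyadic_level_bounds(1)[OF assms(1)] assms(2) by linarith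
  then show ?thesis
    by simp
qed

lemma dyadic_level_powi [simp]: "dyadic_level (2 powi l) = l"
  by (rule dyadic_level_eqI) auto

section \<open>Strips and trees\<close>

lemma mem_strip_iff: "(x, s, \<xi>) \<in> strip m l \<longleftrightarrow> x \<in> dyI m l \<and> 0 < s \<and> s \<le> 2 powi l"
  by (auto simp: strip_def)

lemma fst_strip [simp]: "fst ` strip m l = dyI m l"
proof
  show "dyI m l \<subseteq> fst ` strip m l"
  proof
    fix x
    assume "x \<in> dyI m l"
    then have "(x, 2 powi l, 0) \<in> strip m l"
      by (simp add: mem_strip_iff)
    then show "x \<in> fst ` strip m l"
      by force
  qed
qed (auto simp: strip_def)

lemma strip_subset_iff: "strip m l \<subseteq> strip m' l' \<longleftrightarrow> dyI m l \<subseteq> dyI m' l'"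
proof
  assume "strip m l \<subseteq> strip m' l'"
  then show "dyI m l \<subseteq> dyI m' l'"
    by (metis fst_strip image_mono)
next
  assume "dyI m l \<subseteq> dyI m' l'"
  moreover have "l \<le> l'"
    using dyI_level_le[OF calculation] .
  ultimately show "strip m l \<subseteq> strip m' l'"
    by (auto simp: strip_def) (meson order_trans powi2_le_iff)
qed

lemma strip_inject: "strip m l = strip m' l' \<Longrightarrow> m = m' \<and> l = l'"
  by (metis dyI_inject fst_strip)

lemma sigma_strip_strip [simp]: "sigma_strip (strip m l) = 2 powi l"
  unfolding sigma_strip_def by (rule the_equality) (auto dest: strip_inject)

lemma mem_strips_iff: "E \<in> strips L \<longleftrightarrow> (\<exists>m l. E = strip m l \<and> l \<le> L)"
  by (auto simp: strips_def)

lemma strip_mem_strips_iff: "strip m l \<in> strips L \<longleftrightarrow> l \<le> L"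
  by (auto simp: mem_strips_iff dest: strip_inject)

lemma countable_strips: "countable (strips L)"
proof -
  have "strips L \<subseteq> (\<lambda>(m, l). strip m l) ` UNIV"
    by (auto simp: strips_def)
  then show ?thesis
    by (rule countable_subset) simp
qed

lemma infsum_strips_reindex:
  assumes "\<S> \<subseteq> strips L"
  shows "(\<Sum>\<^sub>\<infinity>(m, l)\<in>{(m, l). strip m l \<in> \<S>}. f (strip m l)) = (\<Sum>\<^sub>\<infinity>E\<in>\<S>. f E)"
proof -
  have "\<S> = (\<lambda>(m, l). strip m l) ` {(m, l). strip m l \<in> \<S>}"
    using assms by (force simp: mem_strips_iff)
  moreover have "inj_on (\<lambda>(m, l). strip m l) {(m, l). strip m l \<in> \<S>}"
    by (auto simp: inj_on_def dest: strip_inject)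
  ultimately show ?thesis
    by (metis (no_types, lifting) infsum_reindex case_prod_unfold comp_apply infsum_cong)
qed

lemma strips_subset_YL: "E \<in> strips L \<Longrightarrow> E \<subseteq> YL L"
  by (force simp: mem_strips_iff strip_def YL_def intro: order_trans)

lemma plus_part_strip: "plus_part (strip m l) = {p \<in> strip m l. 2 powi (l - 1) < fst (snd p)}"
  by (simp add: plus_part_def power_int_diff)

lemma exists_strip_plus_part:
  assumes "p \<in> YL L"
  shows "\<exists>E\<in>strips L. p \<in> plus_part E"
proof -
  obtain x s \<xi> where p: "p = (x, s, \<xi>)" and s: "0 < s" "s \<le> 2 powi L"
    using assms by (cases p) (auto simp: YL_def)
  let ?E = "strip (dyadic_index (dyadic_level s) x) (dyadic_level s)"
  have "p \<in> plus_part ?E"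
    using p s dyadic_level_bounds[OF s(1)] by (simp add: plus_part_strip mem_strip_iff mem_dyI_iff)
  moreover have "?E \<in> strips L"
    using dyadic_level_le[OF s] by (simp add: strip_mem_strips_iff)
  ultimately show ?thesis
    by blast
qed

lemma strip_subset_if_plus_part_point:
  assumes "p \<in> plus_part (strip m l)" and "p \<in> strip m' l'"
  shows "strip m l \<subseteq> strip m' l'"
proof -
  obtain x s \<xi> where p: "p = (x, s, \<xi>)"
    by (cases p)
  have "x \<in> dyI m l" "x \<in> dyI m' l'" "2 powi (l - 1) < s" "s \<le> 2 powi l'"
    using assms p by (auto simp: plus_part_strip mem_strip_iff)
  moreover from this have "l \<le> l'"
    using powi2_less_iff[of "l - 1" l'] by linarith
  ultimately show ?thesis
    using dyI_nested by (simp add: strip_subset_iff)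
qed

lemma Nidx_eqI:
  assumes "dyI n (- l) \<subseteq> dyI N (- l')"
  shows "Nidx n l l' = N"
  unfolding Nidx_def
proof (rule the_equality)
  fix N'
  assume "dyI n (- l) \<subseteq> dyI N' (- l')"
  then show "N' = N"
    using assms dyI_nonempty by (metis mem_dyI_iff subset_empty subset_iff)
qed fact

lemma dyI_subset_dyI_Nidx:
  assumes "l' \<le> l"
  shows "dyI n (- l) \<subseteq> dyI (Nidx n l l') (- l')"
proof -
  obtain x where x: "x \<in> dyI n (- l)"
    using dyI_nonempty by blast
  have "dyI n (- l) \<subseteq> dyI (dyadic_index (- l') x) (- l')"
    using assms x by (intro dyI_nested[of "- l" "- l'" x]) (auto simp: mem_dyI_iff)
  then show ?thesis
    using Nidx_eqI by metis
qed

lemma Nidx_refl [simp]: "Nidx n l l = n"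
  by (rule Nidx_eqI) simp

lemma Nidx_trans:
  assumes "l'' \<le> l'" and "l' \<le> l"
  shows "Nidx (Nidx n l l') l' l'' = Nidx n l l''"
proof -
  have "Nidx n l l'' = Nidx (Nidx n l l') l' l''"
    using dyI_subset_dyI_Nidx[OF assms(2), of n] dyI_subset_dyI_Nidx[OF assms(1), of "Nidx n l l'"]
    by (intro Nidx_eqI) blast
  then show ?thesis
    by simp
qed

lemma mem_tree_iff:
  "(x, s, \<xi>) \<in> tree m l n \<longleftrightarrow>
     x \<in> dyI m l \<and> 0 < s \<and> s \<le> 2 powi l \<and> \<xi> \<in> dyI (Nidx n l (dyadic_level s)) (- dyadic_level s)"
proof
  assume "(x, s, \<xi>) \<in> tree m l n"
  then obtain l' m' where l': "l' \<le> l" "dyI m' l' \<subseteq> dyI m l"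
    and tile: "(x, s, \<xi>) \<in> tile m' l' (Nidx n l l')"
    by (auto simp: tree_def)
  have s: "2 powi (l' - 1) < s" "s \<le> 2 powi l'"
    using tile by (auto simp: tile_def)
  then have "dyadic_level s = l'"
    by (rule dyadic_level_eqI)
  moreover have "0 < s"
    using s(1) by (meson order.strict_trans zero_less_power_int zero_less_numeral)
  moreover have "s \<le> 2 powi l"
    using s(2) l'(1) by (meson order_trans powi2_le_iff)
  ultimately show "x \<in> dyI m l \<and> 0 < s \<and> s \<le> 2 powi l \<and>
      \<xi> \<in> dyI (Nidx n l (dyadic_level s)) (- dyadic_level s)"
    using tile l' by (auto simp: tile_def)
next
  assume x: "x \<in> dyI m l \<and> 0 < s \<and> s \<le> 2 powi l \<and>
      \<xi> \<in> dyI (Nidx n l (dyadic_level s)) (- dyadic_level s)"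
  define l' where "l' = dyadic_level s"
  define m' where "m' = dyadic_index l' x"
  have l': "l' \<le> l"
    using x dyadic_level_le l'_def by blast
  have x': "x \<in> dyI m' l'"
    by (simp add: m'_def mem_dyI_iff)
  have "dyI m' l' \<subseteq> dyI m l"
    using dyI_nested[OF l' x'] x by blast
  moreover have "(x, s, \<xi>) \<in> tile m' l' (Nidx n l l')"
    using x x' dyadic_level_bounds[of s] by (auto simp: tile_def l'_def)
  ultimately show "(x, s, \<xi>) \<in> tree m l n"
    using l' unfolding tree_def by blast
qed

lemma tree_subset_strip: "tree m l n \<subseteq> strip m l"
  by (auto simp: mem_tree_iff mem_strip_iff)

lemma tree_inter_strip_subset_tree:
  assumes "l' \<le> l"
  shows "tree m l n \<inter> strip m' l' \<subseteq> tree m' l' (Nidx n l l')"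
proof
  fix p
  assume p: "p \<in> tree m l n \<inter> strip m' l'"
  obtain x s \<xi> where p_eq: "p = (x, s, \<xi>)"
    by (cases p)
  have s: "0 < s" "s \<le> 2 powi l'"
    using p p_eq by (auto simp: mem_strip_iff)
  have "Nidx (Nidx n l l') l' (dyadic_level s) = Nidx n l (dyadic_level s)"
    using Nidx_trans[OF dyadic_level_le[OF s] assms] .
  then show "p \<in> tree m' l' (Nidx n l l')"
    using p p_eq by (auto simp: mem_tree_iff mem_strip_iff)
qed

lemma tree_level_le:
  assumes "tree m l n \<subseteq> tree m' l' n'"
  shows "l \<le> l'"
proof -
  have "(2 powi l * (of_int m + 1), 2 powi l, 2 powi (- l) * (of_int n + 1)) \<in> tree m l n"
    by (simp add: mem_tree_iff dyI_def)
  then have "(2 powi l * (of_int m + 1), 2 powi l, 2 powi (- l) * (of_int n + 1)) \<in> tree m' l' n'"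
    using assms by blast
  then have "(2::real) powi l \<le> 2 powi l'"
    by (simp only: mem_tree_iff)
  then show ?thesis
    by simp
qed

lemma tau_tree_tree [simp]: "tau_tree (tree m l n) = 2 powi l"
  unfolding tau_tree_def
  by (rule the_equality) (auto, metis order_antisym order_refl tree_level_le)

lemma tree_mem_trees_iff: "tree m l n \<in> trees L \<longleftrightarrow> l \<le> L"
  by (auto simp: trees_def) (metis order_refl order_trans tree_level_le)

lemma mem_trees_iff: "T \<in> trees L \<longleftrightarrow> (\<exists>m l n. T = tree m l n \<and> l \<le> L)"
  by (auto simp: trees_def)

lemma countable_trees: "countable (trees L)"
proof -
  have "trees L \<subseteq> (\<lambda>(m, l, n). tree m l n) ` UNIV"
    by (auto simp: trees_def)
  then show ?thesis
    by (rule countable_subset) simp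
qed

section \<open>Sums of extended nonnegative reals and outer measures\<close>

text \<open>The library fact \<open>summable_on_ennreal\<close> only covers functions of the form
  \<open>ennreal_of_enat \<circ> f\<close>.\<close>

lemma ennreal_summable_on [simp]: "(f :: 'a \<Rightarrow> ennreal) summable_on A"
  by (rule nonneg_summable_on_complete) simp

lemma infsum_mono_set_ennreal:
  fixes f :: "'a \<Rightarrow> ennreal"
  shows "A \<subseteq> B \<Longrightarrow> infsum f A \<le> infsum f B"
  by (intro infsum_mono_neutral) auto

lemma infsum_le_infsum_UN_ennreal:
  fixes g :: "'b \<Rightarrow> ennreal"
  assumes "X \<subseteq> (\<Union>i\<in>I. F i)"
  shows "infsum g X \<le> (\<Sum>\<^sub>\<infinity>i\<in>I. infsum g (F i))"
proof (rule infsum_le_finite_sums)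
  fix G
  assume G: "finite G" "G \<subseteq> X"
  then obtain c where c: "\<And>x. x \<in> G \<Longrightarrow> c x \<in> I \<and> x \<in> F (c x)"
    using assms by (metis UN_E subsetD)
  have "sum g G = (\<Sum>i\<in>c ` G. sum g {x \<in> G. c x = i})"
    using G(1) by (rule sum.image_gen)
  also have "\<dots> \<le> (\<Sum>i\<in>c ` G. infsum g (F i))"
  proof (rule sum_mono)
    fix i
    have "{x \<in> G. c x = i} \<subseteq> F i"
      using c by auto
    then show "sum g {x \<in> G. c x = i} \<le> infsum g (F i)"
      using G(1) infsum_mono_set_ennreal[of "{x \<in> G. c x = i}" "F i" g] by simp
  qed
  also have "\<dots> \<le> (\<Sum>\<^sub>\<infinity>i\<in>I. infsum g (F i))"
    using G(1) c infsum_mono_set_ennreal[of "c ` G" I] by auto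
  finally show "sum g G \<le> (\<Sum>\<^sub>\<infinity>i\<in>I. infsum g (F i))" .
qed simp

lemma infsum_image_le_ennreal:
  fixes g :: "'b \<Rightarrow> ennreal"
  shows "infsum g (h ` A) \<le> (\<Sum>\<^sub>\<infinity>a\<in>A. g (h a))"
  using infsum_le_infsum_UN_ennreal[where X = "h ` A" and I = A and F = "\<lambda>a. {h a}" and g = g]
  by auto

lemma infsum_Un_le_ennreal:
  fixes f :: "'a \<Rightarrow> ennreal"
  shows "infsum f (A \<union> B) \<le> infsum f A + infsum f B"
proof -
  have "infsum f (A \<union> B) = infsum f A + infsum f (B - A)"
    by (metis Un_Diff_cancel infsum_Un_disjoint Diff_disjoint ennreal_summable_on)
  also have "\<dots> \<le> infsum f A + infsum f B"
    by (intro add_left_mono infsum_mono_set_ennreal) auto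
  finally show ?thesis .
qed

lemma nn_integral_count_space_eq_infsum:
  fixes f :: "'a \<Rightarrow> ennreal"
  assumes "countable I"
  shows "(\<integral>\<^sup>+i. f i \<partial>count_space I) = (\<Sum>\<^sub>\<infinity>i\<in>I. f i)"
proof (cases "finite I")
  case True
  then show ?thesis
    by (simp add: nn_integral_count_space_finite)
next
  case False
  then have bij: "bij_betw (from_nat_into I) UNIV I"
    using assms by (intro bij_betw_from_nat_into)
  have "(\<integral>\<^sup>+i. f i \<partial>count_space I) = (\<Sum>n. f (from_nat_into I n))"
    using nn_integral_bij_count_space[OF bij, of f] by (simp add: nn_integral_count_space_nat)
  also have "\<dots> = (\<Sum>\<^sub>\<infinity>n\<in>UNIV. f (from_nat_into I n))"
    using has_sum_imp_sums[OF has_sum_infsum] by (metis ennreal_summable_on sums_unique)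
  also have "\<dots> = (\<Sum>\<^sub>\<infinity>i\<in>I. f i)"
    using bij by (rule infsum_reindex_bij_betw)
  finally show ?thesis .
qed

lemma infsum_cmult_right_ennreal:
  fixes f :: "'a \<Rightarrow> ennreal"
  assumes "countable I"
  shows "(\<Sum>\<^sub>\<infinity>i\<in>I. c * f i) = c * (\<Sum>\<^sub>\<infinity>i\<in>I. f i)"
  using nn_integral_cmult[of f "count_space I" c] by (simp add: nn_integral_count_space_eq_infsum[OF assms])

lemma emeasure_UN_eq_infsum:
  assumes "countable I" and "disjoint_family_on X I" and "\<And>i. i \<in> I \<Longrightarrow> X i \<in> sets M"
  shows "emeasure M (\<Union>i\<in>I. X i) = (\<Sum>\<^sub>\<infinity>i\<in>I. emeasure M (X i))"
  using emeasure_UN_countable[of I X M] assms by (simp add: nn_integral_count_space_eq_infsum)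

lemma ennreal_half_le_iff: "(a::ennreal) / 2 \<le> b \<longleftrightarrow> a \<le> 2 * b"
proof -
  have h: "(a::ennreal) / 2 * 2 = a" for a
    by (simp add: ennreal_divide_times)
  show ?thesis
  proof
    assume "a / 2 \<le> b"
    then have "a / 2 * 2 \<le> b * 2"
      by (rule mult_right_mono) simp
    then show "a \<le> 2 * b"
      by (metis h mult.commute)
  next
    assume "a \<le> 2 * b"
    then have "a / 2 \<le> 2 * b / 2"
      by (rule divide_right_mono_ennreal)
    then show "a / 2 \<le> b"
      by (simp add: ennreal_mult_divide_eq mult.commute)
  qed
qed

lemma outer_measure_le_cover:
  "S' \<subseteq> S \<Longrightarrow> A \<subseteq> \<Union>S' \<Longrightarrow> outer_measure S w A \<le> (\<Sum>\<^sub>\<infinity>E\<in>S'. ennreal (w E))"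
  unfolding outer_measure_def by (rule INF_lower) auto

lemma le_outer_measure:
  "(\<And>S'. S' \<subseteq> S \<Longrightarrow> A \<subseteq> \<Union>S' \<Longrightarrow> c \<le> (\<Sum>\<^sub>\<infinity>E\<in>S'. ennreal (w E))) \<Longrightarrow> c \<le> outer_measure S w A"
  unfolding outer_measure_def by (rule INF_greatest) auto

lemma le_mult_outer_measure:
  assumes "0 < k" and "k \<noteq> \<infinity>"
    and "\<And>S'. S' \<subseteq> S \<Longrightarrow> A \<subseteq> \<Union>S' \<Longrightarrow> c \<le> k * (\<Sum>\<^sub>\<infinity>E\<in>S'. ennreal (w E))"
  shows "c \<le> k * outer_measure S w A"
proof -
  have "c / k \<le> outer_measure S w A"
    using assms by (intro le_outer_measure divide_le_posI_ennreal) (auto simp: mult.commute)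
  then have "c / k * k \<le> outer_measure S w A * k"
    by (rule mult_right_mono) simp
  moreover have "c / k * k = c"
    using assms by (simp add: ennreal_divide_times mult_divide_eq_ennreal top.not_eq_extremum)
  ultimately show ?thesis
    by (simp add: mult.commute)
qed

lemma outer_measure_le_refined_cover:
  assumes "S1 \<subseteq> S" and "\<And>T. T \<in> S2 \<Longrightarrow> F T \<subseteq> S" and "A \<subseteq> \<Union>S1 \<union> (\<Union>T\<in>S2. \<Union>(F T))"
  shows "outer_measure S w A \<le> (\<Sum>\<^sub>\<infinity>E\<in>S1. ennreal (w E)) + (\<Sum>\<^sub>\<infinity>T\<in>S2. \<Sum>\<^sub>\<infinity>E\<in>F T. ennreal (w E))"
proof -
  have "outer_measure S w A \<le> (\<Sum>\<^sub>\<infinity>E\<in>S1 \<union> (\<Union>T\<in>S2. F T). ennreal (w E))"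
    using assms by (intro outer_measure_le_cover) auto
  also have "\<dots> \<le> (\<Sum>\<^sub>\<infinity>E\<in>S1. ennreal (w E)) + (\<Sum>\<^sub>\<infinity>E\<in>(\<Union>T\<in>S2. F T). ennreal (w E))"
    by (rule infsum_Un_le_ennreal)
  also have "\<dots> \<le> (\<Sum>\<^sub>\<infinity>E\<in>S1. ennreal (w E)) + (\<Sum>\<^sub>\<infinity>T\<in>S2. \<Sum>\<^sub>\<infinity>E\<in>F T. ennreal (w E))"
    by (intro add_left_mono infsum_le_infsum_UN_ennreal) simp
  finally show ?thesis .
qed

section \<open>Maximal strips\<close>

lemma Mc_subset: "Mc \<S> \<subseteq> \<S>"
  by (auto simp: Mc_def)

lemma exists_maximal_strip:
  assumes "\<S> \<subseteq> strips L" and "E \<in> \<S>"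
  shows "\<exists>E'\<in>Mc \<S>. E \<subseteq> E'"
proof -
  obtain m0 l0 where E: "E = strip m0 l0"
    using assms by (meson mem_strips_iff subsetD)
  define levels where "levels = {l. \<exists>m. strip m l \<in> \<S> \<and> E \<subseteq> strip m l}"
  have "levels \<subseteq> {l0..L}"
  proof
    fix l
    assume "l \<in> levels"
    then obtain m where "strip m l \<in> strips L" "strip m0 l0 \<subseteq> strip m l"
      using assms(1) by (auto simp: levels_def E)
    then show "l \<in> {l0..L}"
      by (simp add: strip_mem_strips_iff strip_subset_iff dyI_level_le)
  qed
  then have "finite levels"
    by (rule finite_subset) simp
  moreover have "l0 \<in> levels"
    using assms by (auto simp: levels_def E)
  ultimately have "Max levels \<in> levels" and Max_ge: "\<And>l. l \<in> levels \<Longrightarrow> l \<le> Max levels"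
    using Max_in by auto
  then obtain m where m: "strip m (Max levels) \<in> \<S>" "E \<subseteq> strip m (Max levels)"
    by (auto simp: levels_def)
  have "strip m (Max levels) \<in> Mc \<S>"
    unfolding Mc_def
  proof (intro CollectI conjI ballI impI)
    fix F
    assume F: "F \<in> \<S>" "strip m (Max levels) \<subseteq> F"
    then obtain m' l' where F_eq: "F = strip m' l'"
      using assms(1) by (meson mem_strips_iff subsetD)
    have "l' \<in> levels"
      using F F_eq m(2) unfolding levels_def by blast
    then have "l' \<le> Max levels"
      by (rule Max_ge)
    moreover have "Max levels \<le> l'"
      using F(2) F_eq by (simp add: strip_subset_iff dyI_level_le)
    ultimately show "F = strip m (Max levels)"
      using F(2) F_eq by (auto simp: strip_subset_iff dest: dyI_subset_same_level)
  qed fact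
  then show ?thesis
    using m by blast
qed

lemma Union_Mc_strips: "\<S> \<subseteq> strips L \<Longrightarrow> \<Union>(Mc \<S>) = \<Union>\<S>"
  using exists_maximal_strip[of \<S> L] Mc_subset[of \<S>] by blast

lemma fst_Mc_strips_disjoint:
  assumes "\<S> \<subseteq> strips L" and "E \<in> Mc \<S>" and "F \<in> Mc \<S>" and "E \<noteq> F"
  shows "fst ` E \<inter> fst ` F = {}"
proof -
  obtain m l m' l' where EF: "E = strip m l" "F = strip m' l'"
    using assms Mc_subset by (metis mem_strips_iff subsetD)
  have "\<not> E \<subseteq> F" "\<not> F \<subseteq> E"
    using assms unfolding Mc_def by blast+
  then show ?thesis
    using dyI_nested_or_disjoint[of m l m' l'] by (auto simp: EF strip_subset_iff)
qed

lemma disjoint_Mc_strips: "\<S> \<subseteq> strips L \<Longrightarrow> disjoint (Mc \<S>)"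
  unfolding disjoint_def using fst_Mc_strips_disjoint by blast

lemma sets_fst_strips: "E \<in> strips L \<Longrightarrow> fst ` E \<in> sets lborel"
  by (auto simp: mem_strips_iff)

lemma sets_fst_Union_strips: "\<S> \<subseteq> strips L \<Longrightarrow> fst ` \<Union>\<S> \<in> sets lborel"
proof -
  assume S: "\<S> \<subseteq> strips L"
  have "countable \<S>"
    using S countable_strips countable_subset by blast
  moreover have "fst ` \<Union>\<S> = (\<Union>E\<in>\<S>. fst ` E)"
    by blast
  ultimately show ?thesis
    using S sets_fst_strips by (auto intro!: sets.countable_UN')
qed

lemma emeasure_fst_strip: "E \<in> strips L \<Longrightarrow> emeasure lborel (fst ` E) = ennreal (sigma_strip E)"
  by (auto simp: mem_strips_iff)

lemma emeasure_fst_Union_Mc: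
  assumes "\<S> \<subseteq> strips L"
  shows "emeasure lborel (fst ` \<Union>(Mc \<S>)) = (\<Sum>\<^sub>\<infinity>E\<in>Mc \<S>. ennreal (sigma_strip E))"
proof -
  have M: "Mc \<S> \<subseteq> strips L"
    using assms Mc_subset by blast
  have "emeasure lborel (fst ` \<Union>(Mc \<S>)) = emeasure lborel (\<Union>E\<in>Mc \<S>. fst ` E)"
    by (simp add: image_Union)
  also have "\<dots> = (\<Sum>\<^sub>\<infinity>E\<in>Mc \<S>. emeasure lborel (fst ` E))"
  proof (rule emeasure_UN_eq_infsum)
    show "countable (Mc \<S>)"
      using M countable_strips countable_subset by blast
    show "disjoint_family_on (\<lambda>E. fst ` E) (Mc \<S>)"
      unfolding disjoint_family_on_def using fst_Mc_strips_disjoint[OF assms] by blast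
  qed (use M sets_fst_strips in blast)
  also have "\<dots> = (\<Sum>\<^sub>\<infinity>E\<in>Mc \<S>. ennreal (sigma_strip E))"
    using M emeasure_fst_strip by (intro infsum_cong) blast
  finally show ?thesis .
qed

section \<open>The covering function\<close>

definition shadow :: "int \<Rightarrow> pt set \<Rightarrow> real set" where
  "shadow L A = fst ` \<Union>(Qc L A)"

lemma Qc_subset_strips: "Qc L A \<subseteq> strips L"
  by (auto simp: Qc_def)

lemma Nc_subset_strips: "Nc L \<D> \<subseteq> strips L"
  by (auto simp: Nc_def)

lemma Cc_subset_strips: "Cc L A \<subseteq> strips L"
  using Mc_subset Nc_subset_strips unfolding Cc_def by blast

lemma sets_shadow [measurable, simp]: "shadow L A \<in> sets borel"
  using sets_fst_Union_strips[OF Qc_subset_strips] by (simp add: shadow_def)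

lemma Qc_mono: "A \<subseteq> A' \<Longrightarrow> Qc L A \<subseteq> Qc L A'"
  by (auto simp: Qc_def)

lemma mem_Nc_Qc_iff:
  "E \<in> Nc L (Qc L A) \<longleftrightarrow>
     E \<in> strips L \<and> emeasure lborel (fst ` E) \<le> 2 * emeasure lborel (fst ` E \<inter> shadow L A)"
  by (simp add: Nc_def shadow_def ennreal_half_le_iff)

lemma subset_Nc: "\<D> \<subseteq> strips L \<Longrightarrow> \<D> \<subseteq> Nc L \<D>"
proof
  fix E
  assume "\<D> \<subseteq> strips L" "E \<in> \<D>"
  moreover have "fst ` E \<inter> fst ` \<Union>\<D> = fst ` E"
    using calculation by blast
  moreover have "x / 2 \<le> (x::ennreal)" for x
    using mult_right_mono[of 1 2 x] by (simp add: ennreal_half_le_iff)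
  ultimately show "E \<in> Nc L \<D>"
    by (auto simp: Nc_def)
qed

lemma Nc_mono:
  assumes "\<D> \<subseteq> \<D>'" and "\<D>' \<subseteq> strips L"
  shows "Nc L \<D> \<subseteq> Nc L \<D>'"
proof
  fix E
  assume E: "E \<in> Nc L \<D>"
  then have "emeasure lborel (fst ` E \<inter> fst ` \<Union>\<D>) \<le> emeasure lborel (fst ` E \<inter> fst ` \<Union>\<D>')"
    using assms sets_fst_Union_strips[OF assms(2)] sets_fst_strips[of E L]
    by (intro emeasure_mono) (auto simp: Nc_def)
  then show "E \<in> Nc L \<D>'"
    using E by (auto simp: Nc_def)
qed

lemma Union_Cc: "\<Union>(Cc L A) = \<Union>(Nc L (Qc L A))"
  unfolding Cc_def using Union_Mc_strips Nc_subset_strips by blast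

lemma subset_Union_Cc:
  assumes "A \<subseteq> YL L"
  shows "A \<subseteq> \<Union>(Cc L A)"
proof
  fix p
  assume p: "p \<in> A"
  then obtain E where "E \<in> strips L" "p \<in> plus_part E"
    using assms exists_strip_plus_part by blast
  moreover from this have "E \<in> Qc L A"
    using p by (auto simp: Qc_def)
  ultimately show "p \<in> \<Union>(Cc L A)"
    unfolding Union_Cc using subset_Nc[OF Qc_subset_strips] by (auto simp: plus_part_def)
qed

lemma Union_Cc_mono: "A \<subseteq> A' \<Longrightarrow> \<Union>(Cc L A) \<subseteq> \<Union>(Cc L A')"
  unfolding Union_Cc using Nc_mono[OF Qc_mono Qc_subset_strips] by blast

lemma shadow_subset_fst_cover:
  assumes "\<S> \<subseteq> strips L" and "A \<subseteq> \<Union>\<S>"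
  shows "shadow L A \<subseteq> fst ` \<Union>\<S>"
proof
  fix x
  assume "x \<in> shadow L A"
  then obtain E where E: "E \<in> Qc L A" "x \<in> fst ` E"
    by (auto simp: shadow_def)
  obtain m l where "E = strip m l"
    using E(1) by (auto simp: Qc_def mem_strips_iff)
  moreover obtain p where "p \<in> plus_part E" "p \<in> A"
    using E(1) by (auto simp: Qc_def)
  moreover obtain F m' l' where "F \<in> \<S>" "p \<in> F" "F = strip m' l'"
    using assms \<open>p \<in> A\<close> by (metis UnionE mem_strips_iff subsetD)
  ultimately have "E \<subseteq> F"
    using strip_subset_if_plus_part_point by blast
  then show "x \<in> fst ` \<Union>\<S>"
    using E(2) \<open>F \<in> \<S>\<close> by blast
qed

lemma emeasure_shadow_le_muL: "emeasure lborel (shadow L A) \<le> muL L A"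
  unfolding muL_def
proof (rule le_outer_measure)
  fix \<S>
  assume S: "\<S> \<subseteq> strips L" "A \<subseteq> \<Union>\<S>"
  have "emeasure lborel (shadow L A) \<le> emeasure lborel (fst ` \<Union>(Mc \<S>))"
    using shadow_subset_fst_cover[OF S] Union_Mc_strips[OF S(1)]
      sets_fst_Union_strips[OF order_trans[OF Mc_subset S(1)]]
    by (intro emeasure_mono) auto
  also have "\<dots> = (\<Sum>\<^sub>\<infinity>E\<in>Mc \<S>. ennreal (sigma_strip E))"
    using S(1) by (rule emeasure_fst_Union_Mc)
  also have "\<dots> \<le> (\<Sum>\<^sub>\<infinity>E\<in>\<S>. ennreal (sigma_strip E))"
    by (rule infsum_mono_set_ennreal[OF Mc_subset])
  finally show "emeasure lborel (shadow L A) \<le> (\<Sum>\<^sub>\<infinity>E\<in>\<S>. ennreal (sigma_strip E))" .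
qed

lemma muL_Union_Cc_le: "muL L (\<Union>(Cc L A)) \<le> 2 * muL L A"
proof -
  define C where "C = Cc L A"
  have C_strips: "C \<subseteq> strips L"
    unfolding C_def by (rule Cc_subset_strips)
  have C_Nc: "C \<subseteq> Nc L (Qc L A)"
    unfolding C_def Cc_def by (rule Mc_subset)
  have "countable C"
    using C_strips countable_strips countable_subset by blast
  have "muL L (\<Union>C) \<le> (\<Sum>\<^sub>\<infinity>E\<in>C. ennreal (sigma_strip E))"
    unfolding muL_def using C_strips by (rule outer_measure_le_cover) simp
  also have "\<dots> = (\<Sum>\<^sub>\<infinity>E\<in>C. emeasure lborel (fst ` E))"
    using C_strips emeasure_fst_strip by (intro infsum_cong) (metis subsetD)
  also have "\<dots> \<le> (\<Sum>\<^sub>\<infinity>E\<in>C. 2 * emeasure lborel (fst ` E \<inter> shadow L A))"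
    using C_Nc by (intro infsum_mono) (auto simp: mem_Nc_Qc_iff)
  also have "\<dots> = 2 * (\<Sum>\<^sub>\<infinity>E\<in>C. emeasure lborel (fst ` E \<inter> shadow L A))"
    using \<open>countable C\<close> by (rule infsum_cmult_right_ennreal)
  also have "(\<Sum>\<^sub>\<infinity>E\<in>C. emeasure lborel (fst ` E \<inter> shadow L A)) =
      emeasure lborel (\<Union>E\<in>C. fst ` E \<inter> shadow L A)"
  proof (rule emeasure_UN_eq_infsum[symmetric])
    show "disjoint_family_on (\<lambda>E. fst ` E \<inter> shadow L A) C"
      using fst_Mc_strips_disjoint[OF Nc_subset_strips]
      unfolding disjoint_family_on_def C_def Cc_def by blast
  qed (use \<open>countable C\<close> C_strips sets_fst_strips in auto)
  also have "emeasure lborel (\<Union>E\<in>C. fst ` E \<inter> shadow L A) \<le> emeasure lborel (shadow L A)"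
    by (intro emeasure_mono) auto
  also have "\<dots> \<le> muL L A"
    by (rule emeasure_shadow_le_muL)
  finally show ?thesis
    by (simp add: C_def mult_left_mono)
qed

lemma covering_function_Cc:
  assumes "Phi \<ge> 2"
  shows "covering_function (YL L) (muL L) (strips L) Phi (Cc L)"
  unfolding covering_function_def
proof (intro conjI allI impI)
  fix A
  assume "A \<subseteq> YL L"
  then show "A \<subseteq> \<Union>(Cc L A)"
    by (rule subset_Union_Cc)
  show "Cc L A \<subseteq> strips L"
    by (rule Cc_subset_strips)
  show "disjoint (Cc L A)"
    unfolding Cc_def by (rule disjoint_Mc_strips[OF Nc_subset_strips])
  have "muL L (\<Union>(Cc L A)) \<le> 2 * muL L A"
    by (rule muL_Union_Cc_le)
  also have "\<dots> \<le> ennreal Phi * muL L A"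
    using assms by (intro mult_right_mono) (auto simp: ennreal_le_iff[symmetric])
  finally show "muL L (\<Union>(Cc L A)) \<le> ennreal Phi * muL L A" .
next
  fix A A' :: "pt set"
  assume "A \<subseteq> A' \<and> A' \<subseteq> YL L"
  then show "\<Union>(Cc L A) \<subseteq> \<Union>(Cc L A')"
    using Union_Cc_mono by blast
qed

section \<open>The Caratheodory property\<close>

lemma shadow_small_if_tree_not_in_Union_Cc:
  assumes "l \<le> L" and "\<not> tree m l n \<subseteq> \<Union>(Cc L W)"
  shows "2 * emeasure lborel (dyI m l \<inter> shadow L W) \<le> ennreal (2 powi l)"
proof -
  have "strip m l \<notin> Nc L (Qc L W)"
    using assms(2) tree_subset_strip unfolding Union_Cc by blast
  then have "\<not> ennreal (2 powi l) \<le> 2 * emeasure lborel (dyI m l \<inter> shadow L W)"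
    using assms(1) by (simp add: mem_Nc_Qc_iff strip_mem_strips_iff)
  then show ?thesis
    by simp
qed

lemma tree_inter_subset_maximal_subtree:
  assumes "l \<le> L" and p: "p \<in> tree m l n \<inter> W"
  shows "\<exists>m' l'. strip m' l' \<in> Mc {E \<in> Qc L W. fst ` E \<subseteq> dyI m l} \<and> p \<in> tree m' l' (Nidx n l l')"
proof -
  have p_strip: "p \<in> strip m l"
    using p tree_subset_strip by blast
  moreover have "strip m l \<in> strips L"
    using assms(1) by (simp add: strip_mem_strips_iff)
  ultimately obtain E0 where E0: "E0 \<in> strips L" "p \<in> plus_part E0"
    using exists_strip_plus_part strips_subset_YL by blast
  then obtain m0 l0 where "E0 = strip m0 l0"
    by (auto simp: mem_strips_iff)
  then have "E0 \<subseteq> strip m l"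
    using strip_subset_if_plus_part_point[of p m0 l0 m l] E0(2) p_strip by simp
  then have "fst ` E0 \<subseteq> dyI m l"
    by (metis fst_strip image_mono)
  moreover have "E0 \<in> Qc L W"
    using E0 p by (auto simp: Qc_def)
  ultimately have "E0 \<in> {E \<in> Qc L W. fst ` E \<subseteq> dyI m l}"
    by blast
  moreover have Q: "{E \<in> Qc L W. fst ` E \<subseteq> dyI m l} \<subseteq> strips L"
    using Qc_subset_strips by blast
  ultimately obtain E where E: "E \<in> Mc {E \<in> Qc L W. fst ` E \<subseteq> dyI m l}" "E0 \<subseteq> E"
    using exists_maximal_strip[of "{E \<in> Qc L W. fst ` E \<subseteq> dyI m l}" L E0] by blast
  then have "E \<in> strips L" and E_below: "fst ` E \<subseteq> dyI m l"
    using Mc_subset Q by blast+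
  then obtain m' l' where E_eq: "E = strip m' l'"
    by (meson mem_strips_iff)
  have "l' \<le> l"
    using E_below by (simp add: E_eq dyI_level_le)
  moreover have "p \<in> strip m' l'"
    using E E0(2) E_eq by (auto simp: plus_part_def)
  ultimately have "p \<in> tree m' l' (Nidx n l l')"
    using tree_inter_strip_subset_tree[of l' l m n m'] p by blast
  then show ?thesis
    using E(1) E_eq by blast
qed

lemma small_trees_cover_tree_inter:
  assumes "l \<le> L" and small: "2 * emeasure lborel (dyI m l \<inter> shadow L W) \<le> ennreal (2 powi l)"
  shows "\<exists>F\<subseteq>trees L. tree m l n \<inter> W \<subseteq> \<Union>F \<and> 2 * (\<Sum>\<^sub>\<infinity>T\<in>F. ennreal (tau_tree T)) \<le> ennreal (2 powi l)"
proof -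
  define \<S> where "\<S> = Mc {E \<in> Qc L W. fst ` E \<subseteq> dyI m l}"
  define I where "I = {(m', l'). strip m' l' \<in> \<S>}"
  define F where "F = (\<lambda>(m', l'). tree m' l' (Nidx n l l')) ` I"
  have \<S>_sub: "E \<in> Qc L W" "fst ` E \<subseteq> dyI m l" if "E \<in> \<S>" for E
    using that Mc_subset unfolding \<S>_def by blast+
  then have \<S>_strips: "\<S> \<subseteq> strips L"
    using Qc_subset_strips by blast
  have F_trees: "F \<subseteq> trees L"
    using \<S>_strips by (auto simp: F_def I_def tree_mem_trees_iff strip_mem_strips_iff)
  have F_cover: "tree m l n \<inter> W \<subseteq> \<Union>F"
  proof
    fix p
    assume "p \<in> tree m l n \<inter> W"
    then obtain m' l' where "strip m' l' \<in> \<S>" and p: "p \<in> tree m' l' (Nidx n l l')"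
      using tree_inter_subset_maximal_subtree[OF assms(1)] unfolding \<S>_def by blast
    then have "tree m' l' (Nidx n l l') \<in> F"
      unfolding F_def I_def by force
    then show "p \<in> \<Union>F"
      using p by blast
  qed
  have "(\<Sum>\<^sub>\<infinity>T\<in>F. ennreal (tau_tree T)) \<le> (\<Sum>\<^sub>\<infinity>(m', l')\<in>I. ennreal (tau_tree (tree m' l' (Nidx n l l'))))"
    unfolding F_def case_prod_unfold by (rule infsum_image_le_ennreal)
  also have "\<dots> = (\<Sum>\<^sub>\<infinity>(m', l')\<in>I. ennreal (sigma_strip (strip m' l')))"
    by simp
  also have "\<dots> = (\<Sum>\<^sub>\<infinity>E\<in>\<S>. ennreal (sigma_strip E))"
    unfolding I_def using \<S>_strips by (rule infsum_strips_reindex)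
  also have "\<dots> = emeasure lborel (fst ` \<Union>\<S>)"
    unfolding \<S>_def using Qc_subset_strips by (intro emeasure_fst_Union_Mc[symmetric]) blast
  also have "\<dots> \<le> emeasure lborel (dyI m l \<inter> shadow L W)"
  proof (rule emeasure_mono)
    show "fst ` \<Union>\<S> \<subseteq> dyI m l \<inter> shadow L W"
      using \<S>_sub unfolding shadow_def by blast
  qed simp
  finally have "2 * (\<Sum>\<^sub>\<infinity>T\<in>F. ennreal (tau_tree T)) \<le> 2 * emeasure lborel (dyI m l \<inter> shadow L W)"
    by (rule mult_left_mono) simp
  also note small
  finally show ?thesis
    using F_trees F_cover by blast
qed

lemma small_trees_cover_tree_outside_Union_Cc:
  assumes "T \<in> trees L" and "\<not> T \<subseteq> \<Union>(Cc L W)"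
  shows "\<exists>F\<subseteq>trees L. T \<inter> W \<subseteq> \<Union>F \<and> 2 * (\<Sum>\<^sub>\<infinity>T'\<in>F. ennreal (tau_tree T')) \<le> ennreal (tau_tree T)"
proof -
  obtain m l n where T: "T = tree m l n" "l \<le> L"
    using assms(1) by (meson mem_trees_iff)
  then have "2 * emeasure lborel (dyI m l \<inter> shadow L W) \<le> ennreal (2 powi l)"
    using assms(2) by (intro shadow_small_if_tree_not_in_Union_Cc) auto
  from small_trees_cover_tree_inter[OF T(2) this, of n] show ?thesis
    using T(1) by simp
qed

lemma add_mult_le_mult_add_ennreal:
  fixes a b c :: ennreal
  assumes K: "K \<ge> 2" and bc: "2 * c \<le> b"
  shows "b + ennreal K * (a + c) \<le> ennreal K * (a + b)"
proof -
  have "ennreal (K / 2 * 2) = ennreal (K / 2) * 2"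
    using K by (subst ennreal_mult) auto
  then have K_eq: "ennreal K = ennreal (K / 2) * 2"
    by simp
  have "ennreal K * c = ennreal (K / 2) * (2 * c)"
    by (simp add: K_eq mult.assoc)
  also have "\<dots> \<le> ennreal (K / 2) * b"
    using bc by (rule mult_left_mono) simp
  finally have Kc: "ennreal K * c \<le> ennreal (K / 2) * b" .
  have "b + ennreal (K / 2) * b = ennreal (1 + K / 2) * b"
    using K by (simp add: ennreal_plus[symmetric] distrib_right)
  also have "\<dots> \<le> ennreal K * b"
    using K by (intro mult_right_mono ennreal_leI) auto
  finally have Kb: "b + ennreal (K / 2) * b \<le> ennreal K * b" .
  have "b + ennreal K * (a + c) = ennreal K * a + (b + ennreal K * c)"
    by (simp add: distrib_left add_ac)
  also have "\<dots> \<le> ennreal K * a + ennreal K * b"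
    using Kc Kb by (metis add_left_mono order_trans)
  finally show ?thesis
    by (simp add: distrib_left)
qed

lemma nuL_inter_le_pruned_cover:
  assumes "S \<subseteq> trees L" and "U \<inter> W \<subseteq> \<Union>S"
  shows "\<exists>c. nuL L (U \<inter> W) \<le> (\<Sum>\<^sub>\<infinity>T\<in>{T \<in> S. T \<subseteq> \<Union>(Cc L W)}. ennreal (tau_tree T)) + c \<and>
             2 * c \<le> (\<Sum>\<^sub>\<infinity>T\<in>{T \<in> S. \<not> T \<subseteq> \<Union>(Cc L W)}. ennreal (tau_tree T))"
proof -
  define S1 where "S1 = {T \<in> S. T \<subseteq> \<Union>(Cc L W)}"
  define S2 where "S2 = {T \<in> S. \<not> T \<subseteq> \<Union>(Cc L W)}"
  have "\<forall>T\<in>S2. \<exists>F\<subseteq>trees L. T \<inter> W \<subseteq> \<Union>F \<and>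
      2 * (\<Sum>\<^sub>\<infinity>T'\<in>F. ennreal (tau_tree T')) \<le> ennreal (tau_tree T)"
  proof
    fix T
    assume "T \<in> S2"
    then have "T \<in> trees L" "\<not> T \<subseteq> \<Union>(Cc L W)"
      using assms(1) by (auto simp: S2_def)
    then show "\<exists>F\<subseteq>trees L. T \<inter> W \<subseteq> \<Union>F \<and>
        2 * (\<Sum>\<^sub>\<infinity>T'\<in>F. ennreal (tau_tree T')) \<le> ennreal (tau_tree T)"
      by (rule small_trees_cover_tree_outside_Union_Cc)
  qed
  then obtain Fs where Fs: "\<forall>T\<in>S2. Fs T \<subseteq> trees L \<and> T \<inter> W \<subseteq> \<Union>(Fs T) \<and>
      2 * (\<Sum>\<^sub>\<infinity>T'\<in>Fs T. ennreal (tau_tree T')) \<le> ennreal (tau_tree T)"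
    by (rule bchoice[THEN exE])
  define c where "c = (\<Sum>\<^sub>\<infinity>T\<in>S2. \<Sum>\<^sub>\<infinity>T'\<in>Fs T. ennreal (tau_tree T'))"
  have "U \<inter> W \<subseteq> \<Union>S1 \<union> (\<Union>T\<in>S2. \<Union>(Fs T))"
  proof
    fix p
    assume p: "p \<in> U \<inter> W"
    then obtain T where T: "T \<in> S" "p \<in> T"
      using assms(2) by blast
    show "p \<in> \<Union>S1 \<union> (\<Union>T\<in>S2. \<Union>(Fs T))"
    proof (cases "T \<in> S1")
      case True
      then show ?thesis
        using T by blast
    next
      case False
      then have "T \<in> S2"
        using T by (simp add: S1_def S2_def)
      then have "T \<inter> W \<subseteq> \<Union>(Fs T)"
        using Fs by blast
      then have "p \<in> \<Union>(Fs T)"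
        using p T by blast
      then show ?thesis
        using \<open>T \<in> S2\<close> by blast
    qed
  qed
  moreover have "S1 \<subseteq> trees L" "S2 \<subseteq> trees L"
    using assms(1) by (auto simp: S1_def S2_def)
  moreover have "\<And>T. T \<in> S2 \<Longrightarrow> Fs T \<subseteq> trees L"
    using Fs by blast
  ultimately have nu_W: "nuL L (U \<inter> W) \<le> (\<Sum>\<^sub>\<infinity>T\<in>S1. ennreal (tau_tree T)) + c"
    unfolding nuL_def c_def by (intro outer_measure_le_refined_cover)
  have "countable S2"
    using \<open>S2 \<subseteq> trees L\<close> countable_trees by (rule countable_subset)
  then have "2 * c = (\<Sum>\<^sub>\<infinity>T\<in>S2. 2 * (\<Sum>\<^sub>\<infinity>T'\<in>Fs T. ennreal (tau_tree T')))"
    unfolding c_def by (rule infsum_cmult_right_ennreal[symmetric])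
  also have "\<dots> \<le> (\<Sum>\<^sub>\<infinity>T\<in>S2. ennreal (tau_tree T))"
    using Fs by (intro infsum_mono) simp_all
  finally show ?thesis
    using nu_W unfolding S1_def S2_def by blast
qed

lemma nuL_add_le_cover:
  assumes K: "K \<ge> 2" and D: "D \<inter> \<Union>(Cc L W) = {}"
    and S: "S \<subseteq> trees L" "U \<inter> (D \<union> W) \<subseteq> \<Union>S"
  shows "nuL L (U \<inter> D) + ennreal K * nuL L (U \<inter> W) \<le> ennreal K * (\<Sum>\<^sub>\<infinity>T\<in>S. ennreal (tau_tree T))"
proof -
  define S1 where "S1 = {T \<in> S. T \<subseteq> \<Union>(Cc L W)}"
  define S2 where "S2 = {T \<in> S. \<not> T \<subseteq> \<Union>(Cc L W)}"
  define a where "a = (\<Sum>\<^sub>\<infinity>T\<in>S1. ennreal (tau_tree T))"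
  define b where "b = (\<Sum>\<^sub>\<infinity>T\<in>S2. ennreal (tau_tree T))"
  have "U \<inter> W \<subseteq> \<Union>S"
    using S(2) by blast
  then obtain c where nu_W: "nuL L (U \<inter> W) \<le> a + c" and "2 * c \<le> b"
    using nuL_inter_le_pruned_cover[OF S(1)] unfolding a_def b_def S1_def S2_def by blast
  have "U \<inter> D \<subseteq> \<Union>S2"
  proof
    fix p
    assume p: "p \<in> U \<inter> D"
    then obtain T where "T \<in> S" "p \<in> T"
      using S(2) by blast
    moreover have "p \<notin> \<Union>(Cc L W)"
      using p D by blast
    ultimately show "p \<in> \<Union>S2"
      by (auto simp: S2_def)
  qed
  then have nu_D: "nuL L (U \<inter> D) \<le> b"
    unfolding nuL_def b_def using S(1) by (intro outer_measure_le_cover) (auto simp: S2_def)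
  have "S = S1 \<union> S2" "S1 \<inter> S2 = {}"
    by (auto simp: S1_def S2_def)
  then have "a + b = (\<Sum>\<^sub>\<infinity>T\<in>S. ennreal (tau_tree T))"
    unfolding a_def b_def by (simp add: infsum_Un_disjoint)
  have "nuL L (U \<inter> D) + ennreal K * nuL L (U \<inter> W) \<le> b + ennreal K * (a + c)"
    using nu_D nu_W by (intro add_mono mult_left_mono) auto
  also have "\<dots> \<le> ennreal K * (a + b)"
    using K \<open>2 * c \<le> b\<close> by (rule add_mult_le_mult_add_ennreal)
  finally show ?thesis
    using \<open>a + b = _\<close> by simp
qed

lemma nuL_add_le:
  assumes "K \<ge> 2" and "D \<inter> \<Union>(Cc L W) = {}"
  shows "nuL L (U \<inter> D) + ennreal K * nuL L (U \<inter> W) \<le> ennreal K * nuL L (U \<inter> (D \<union> W))"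
proof -
  have "nuL L (U \<inter> D) + ennreal K * nuL L (U \<inter> W) \<le>
      ennreal K * outer_measure (trees L) tau_tree (U \<inter> (D \<union> W))"
    using assms by (intro le_mult_outer_measure nuL_add_le_cover) auto
  then show ?thesis
    by (simp only: nuL_def)
qed

lemma caratheodory_insert:
  assumes K: "K \<ge> 2" and car: "caratheodory (YL L) (nuL L) K \<A>"
    and D: "D \<subseteq> YL L" "D \<inter> \<Union>(Cc L (\<Union>\<A>)) = {}"
  shows "caratheodory (YL L) (nuL L) K (insert D \<A>)"
proof (cases "D \<in> \<A>")
  case True
  then show ?thesis
    using car by (simp add: insert_absorb)
next
  case False
  have \<A>: "disjoint \<A>" "\<forall>A\<in>\<A>. A \<subseteq> YL L"
    "\<And>U. U \<subseteq> YL L \<Longrightarrow> (\<Sum>\<^sub>\<infinity>A\<in>\<A>. nuL L (U \<inter> A)) \<le> ennreal K * nuL L (U \<inter> \<Union>\<A>)"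
    using car unfolding caratheodory_def by auto
  have "D \<inter> \<Union>\<A> = {}"
    using D(2) subset_Union_Cc[of "\<Union>\<A>" L] \<A>(2) by blast
  then have "disjoint (insert D \<A>)"
    using \<A>(1) by (auto simp: pairwise_insert disjnt_def)
  moreover have "\<forall>A\<in>insert D \<A>. A \<subseteq> YL L"
    using \<A>(2) D(1) by blast
  moreover have "(\<Sum>\<^sub>\<infinity>A\<in>insert D \<A>. nuL L (U \<inter> A)) \<le> ennreal K * nuL L (U \<inter> \<Union>(insert D \<A>))"
    if "U \<subseteq> YL L" for U
  proof -
    have "(\<Sum>\<^sub>\<infinity>A\<in>insert D \<A>. nuL L (U \<inter> A)) = nuL L (U \<inter> D) + (\<Sum>\<^sub>\<infinity>A\<in>\<A>. nuL L (U \<inter> A))"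
      using False by (simp add: infsum_insert)
    also have "\<dots> \<le> nuL L (U \<inter> D) + ennreal K * nuL L (U \<inter> \<Union>\<A>)"
      using \<A>(3)[OF that] by (rule add_left_mono)
    also have "\<dots> \<le> ennreal K * nuL L (U \<inter> (D \<union> \<Union>\<A>))"
      using K D(2) by (rule nuL_add_le)
    finally show ?thesis
      by simp
  qed
  ultimately show ?thesis
    unfolding caratheodory_def by blast
qed

theorem lemma4p6:
  fixes L :: int and Phi K :: real
  assumes "Phi \<ge> 2" and "K \<ge> 2"
  shows "canopy_condition (YL L) (muL L) (nuL L) (strips L) Phi K (Cc L)"
  unfolding canopy_condition_def
  using covering_function_Cc[OF assms(1)] caratheodory_insert[OF assms(2)] by blast

end
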